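(* Let $\mathcal{E}\subseteq[5]\times[5]$ be the erasure pattern $$\mathcal{E}=\{(1,2),(1,3),(1,4),(1,5),(2,1),(2,2),(2,3),(3,1),(3,2),(3,3),(4,1),(4,4),(4,5),(5,1),(5,4),(5,5)\},$$ i.e., as a $5\times 5$ array (row $i$, column $j$) with $\star$ marking erasures: row 1: $0\,\star\,\star\,\star\,\star$; rows 2 and 3: $\star\,\star\,\star\,0\,0$; rows 4 and 5: $\star\,0\,0\,\star\,\star$. Then $\mathcal{E}$ is regular for $T_{5\times5}(2,2,0)$, and $\mathcal{E}$ is not correctable in the topology $T_{5\times 5}(2,2,0)$.
   Context: Positions of vectors in $\mathbb{F}^{mn}$ are identified with $[m]\times[n]$, $[k]=\{1,\dots,k\}$. For linear codes $\mathcal{C}_1\subseteq\mathbb{F}^m,\mathcal{C}_2\subseteq\mathbb{F}^n$, $\mathcal{C}_1\otimes\mathcal{C}_2$ is the row span of the Kronecker product of their generator matrices (arrays with all columns in $\mathcal{C}_1$ and all rows in $\mathcal{C}_2$). A code for the topology $T_{m\times n}(a,b,0)$ is a linear code over a finite field $\mathbb{F}$ of the form $\mathcal{C}_{\mathsf{col}}\otimes\mathcal{C}_{\mathsf{row}}$ (i.e., with parity-check matrix a parity-check matrix of $\mathcal{C}_{\mathsf{col}}\otimes\mathcal{C}_{\mathsf{row}}$), where $\mathcal{C}_{\mathsf{col}}$ is a linear $[m,\geq m-a]$ code and $\mathcal{C}_{\mathsf{row}}$ a linear $[n,\geq n-b]$ code over $\mathbb{F}$; $\mathbb{C}_{m\times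 n}(a,b,0)$ is the set of these codes (over any finite field). A code corrects an erasure pattern $\mathcal{E}$ if no two distinct codewords agree on all positions outside $\mathcal{E}$; $\mathcal{E}$ is correctable in $T_{m\times n}(a,b,0)$ if some code in $\mathbb{C}_{m\times n}(a,b,0)$ corrects it. An erasure pattern $\mathcal{E}\subseteq[m]\times[n]$ is regular (for $T_{m\times n}(a,b,0)$) if for all $\mathcal{U}\subseteq[m]$ with $|\mathcal{U}|=u\geq a$ and all $\mathcal{V}\subseteq[n]$ with $|\mathcal{V}|=v\geq b$ one has $|\mathcal{E}\cap(\mathcal{U}\times\mathcal{V})|\leq va+ub-ab$. *)

theory Defs
  imports Complex_Main "HOL-Library.Function_Algebras"
begin

text \<open>Vectors of length m over a field are functions nat => 'a, with coordinates
  indexed by [m] = {1..m}; coordinates outside [m] are zero.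
  Scalar multiplication on such functions is pointwise.\<close>

definition fscale :: "'a::field \<Rightarrow> (nat \<Rightarrow> 'a) \<Rightarrow> (nat \<Rightarrow> 'a)" where
  "fscale c x = (\<lambda>i. c * x i)"

definition lin_code :: "nat \<Rightarrow> nat \<Rightarrow> (nat \<Rightarrow> 'a::field) set \<Rightarrow> bool" where
  "lin_code m k C \<longleftrightarrow>
     C \<subseteq> {x. \<forall>i. i \<notin> {1..m} \<longrightarrow> x i = 0}
   \<and> module.subspace fscale C
   \<and> vector_space.dim fscale C \<ge> k"

text \<open>Since codewords vanish outside their index range,
  such arrays vanish outside [m] x [n].\<close>
definition tensor_code :: "(nat \<Rightarrow> 'a::field) set \<Rightarrow> (nat \<Rightarrow> 'a) set \<Rightarrow> (nat \<times> nat \<Rightarrow> 'a) set" where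
  "tensor_code C1 C2 = {X. (\<forall>j. (\<lambda>i. X (i, j)) \<in> C1) \<and> (\<forall>i. (\<lambda>j. X (i, j)) \<in> C2)}"

definition corrects :: "nat \<Rightarrow> nat \<Rightarrow> (nat \<times> nat \<Rightarrow> 'a) set \<Rightarrow> (nat \<times> nat) set \<Rightarrow> bool" where
  "corrects m n C E \<longleftrightarrow>
     (\<forall>X\<in>C. \<forall>Y\<in>C. (\<forall>p \<in> ({1..m} \<times> {1..n}) - E. X p = Y p) \<longrightarrow> X = Y)"

text \<open>E is correctable in T_{m x n}(a,b,0) over the (finite) field 'a: some code
  C_col (x) C_row with C_col a linear [m, >= m-a] code and C_row a linear [n, >= n-b]
  code over 'a corrects E.\<close>
definition correctable_over :: "'a::{field,finite} itself \<Rightarrow> nat \<Rightarrow> nat \<Rightarrow> nat \<Rightarrow> nat \<Rightarrow> (nat \<times> nat) set \<Rightarrow> bool" where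
  "correctable_over _ m n a b E \<longleftrightarrow>
     (\<exists>(Ccol :: (nat \<Rightarrow> 'a) set) Crow. lin_code m (m - a) Ccol \<and> lin_code n (n - b) Crow
        \<and> corrects m n (tensor_code Ccol Crow) E)"

definition regular :: "nat \<Rightarrow> nat \<Rightarrow> nat \<Rightarrow> nat \<Rightarrow> (nat \<times> nat) set \<Rightarrow> bool" where
  "regular m n a b E \<longleftrightarrow>
     (\<forall>U V. U \<subseteq> {1..m} \<longrightarrow> V \<subseteq> {1..n} \<longrightarrow> card U \<ge> a \<longrightarrow> card V \<ge> b \<longrightarrow>
        int (card (E \<inter> (U \<times> V))) \<le> int (card V * a + card U * b) - int (a * b))"

definition E4 :: "(nat \<times> nat) set" where
  "E4 = {(1,2),(1,3),(1,4),(1,5),(2,1),(2,2),(2,3),(3,1),(3,2),(3,3),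
         (4,1),(4,4),(4,5),(5,1),(5,4),(5,5)}"

end

theory Submission
  imports Defs
begin

text \<open>The positions outside \<open>E4\<close> are \<open>(1,1)\<close> and the two blocks
  \<open>{2,3} \<times> {4,5}\<close> and \<open>{4,5} \<times> {2,3}\<close>. A code of dimension at least 3
  contains a nonzero word vanishing on any two prescribed coordinates. Take
  \<open>a, c \<in> C\<^sub>c\<^sub>o\<^sub>l\<close> vanishing on \<open>{4,5}\<close> and \<open>{2,3}\<close>, and
  \<open>b, d \<in> C\<^sub>r\<^sub>o\<^sub>w\<close> vanishing on \<open>{4,5}\<close> and \<open>{2,3}\<close>: the outer
  products \<open>a \<otimes> b\<close> and \<open>c \<otimes> d\<close> vanish on the two blocks, and since \<open>a\<close> is
  nonzero in row 2 or 3, where \<open>c\<close> vanishes, some nonzero combination of them vanishes at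
  \<open>(1,1)\<close> as well. If \<open>a\<close> is instead supported on row 1, then \<open>a \<otimes> q\<close> with
  \<open>0 \<noteq> q \<in> C\<^sub>r\<^sub>o\<^sub>w\<close>, \<open>q 1 = 0\<close> does the job. A nonzero codeword
  vanishing off the erasures is indistinguishable from \<open>0\<close>. Regularity is a finite check.\<close>

interpretation fscale: vector_space "fscale :: 'a::field \<Rightarrow> (nat \<Rightarrow> 'a) \<Rightarrow> _"
  by unfold_locales (auto simp: fscale_def fun_eq_iff algebra_simps)

lemma sum_fun_apply:
  "finite A \<Longrightarrow> (\<Sum>a\<in>A. f a) x = (\<Sum>a\<in>A. f a x :: 'b::comm_monoid_add)"
  by (induction A rule: finite_induct) auto

lemma fscale_linear_restrict:
  "Vector_Spaces.linear fscale fscale (\<lambda>(x :: nat \<Rightarrow> 'a::field) i. if i \<in> Z then x i else 0)"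
  by (auto simp: Vector_Spaces.linear_iff fscale_def fun_eq_iff fscale.vector_space_axioms)

lemma fscale_dim_le_card_support:
  fixes S :: "(nat \<Rightarrow> 'a::field) set"
  assumes "finite Z" and "\<And>x i. x \<in> S \<Longrightarrow> i \<notin> Z \<Longrightarrow> x i = 0"
  shows "fscale.dim S \<le> card Z"
proof -
  define W :: "(nat \<Rightarrow> 'a) set" where "W = (\<lambda>z i. if i = z then 1 else 0) ` Z"
  have "x = (\<Sum>z\<in>Z. fscale (x z) (\<lambda>i. if i = z then 1 else 0))" if "x \<in> S" for x
    using assms that by (auto simp: fun_eq_iff fscale_def sum_fun_apply if_distrib[of "(*) _"] cong: if_cong)
  then have "S \<subseteq> fscale.span W"
    by (metis (no_types, lifting) W_def fscale.span_base fscale.span_scale fscale.span_sum imageI subsetI)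
  then have "fscale.dim S \<le> card W"
    using assms(1) by (simp add: W_def fscale.dim_le_card)
  also have "\<dots> \<le> card Z"
    using assms(1) by (simp add: W_def card_image_le)
  finally show ?thesis .
qed

lemma fscale_subspace_nonzero_vanishing_on:
  fixes C :: "(nat \<Rightarrow> 'a::field) set"
  assumes C: "fscale.subspace C" and dim: "k \<le> fscale.dim C"
    and Z: "finite Z" "card Z < k"
  shows "\<exists>x\<in>C. x \<noteq> 0 \<and> (\<forall>z\<in>Z. x z = 0)"
proof (rule ccontr)
  define r :: "(nat \<Rightarrow> 'a) \<Rightarrow> nat \<Rightarrow> 'a" where "r x = (\<lambda>i. if i \<in> Z then x i else 0)" for x
  interpret r: Vector_Spaces.linear fscale fscale r
    unfolding r_def by (rule fscale_linear_restrict)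
  assume "\<not> ?thesis"
  then have inj: "inj_on r C"
    using r.inj_on_iff_eq_0[OF C] by (auto simp: r_def fun_eq_iff)
  obtain B where B: "B \<subseteq> C" "fscale.independent B" "C \<subseteq> fscale.span B" "card B = fscale.dim C"
    using fscale.basis_exists by blast
  have "fscale.span B \<subseteq> C"
    using B(1) C by (rule fscale.span_minimal)
  with inj have inj_span: "inj_on r (fscale.span B)"
    by (rule inj_on_subset)
  have "fscale.dim C = card (r ` B)"
    using B(4) inj_span fscale.span_superset by (metis card_image inj_on_subset)
  also have "\<dots> = fscale.dim (r ` B)"
    using r.independent_injective_image[OF B(2) inj_span] by (simp add: fscale.dim_eq_card_independent)
  also have "\<dots> \<le> card Z"
    using Z(1) by (rule fscale_dim_le_card_support) (auto simp: r_def)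
  finally show False
    using dim Z(2) by linarith
qed

definition outer_prod :: "(nat \<Rightarrow> 'a::times) \<Rightarrow> (nat \<Rightarrow> 'a) \<Rightarrow> nat \<times> nat \<Rightarrow> 'a" where
  "outer_prod a b = (\<lambda>(i, j). a i * b j)"

lemma outer_prod_eq_0_iff:
  "outer_prod a b = 0 \<longleftrightarrow> a = 0 \<or> (b :: nat \<Rightarrow> 'a::semiring_no_zero_divisors) = 0"
proof
  assume "outer_prod a b = 0"
  then have "a i * b j = 0" for i j
    by (metis case_prod_conv outer_prod_def zero_fun_def)
  then show "a = 0 \<or> b = 0"
    by (auto simp: fun_eq_iff)
qed (auto simp: outer_prod_def fun_eq_iff)

lemma outer_prod_in_tensor_code:
  assumes "fscale.subspace C1" "fscale.subspace C2" "a \<in> C1" "b \<in> C2"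
  shows "outer_prod a b \<in> tensor_code C1 C2"
proof -
  have "(\<lambda>i. a i * b j) \<in> C1" for j
    using fscale.subspace_scale[OF assms(1,3), of "b j"] by (simp add: fscale_def mult.commute)
  moreover have "(\<lambda>j. a i * b j) \<in> C2" for i
    using fscale.subspace_scale[OF assms(2,4), of "a i"] by (simp add: fscale_def)
  ultimately show ?thesis
    by (simp add: tensor_code_def outer_prod_def)
qed

lemma tensor_code_diff_scale:
  assumes "fscale.subspace C1" "fscale.subspace C2"
    and "X \<in> tensor_code C1 C2" "Y \<in> tensor_code C1 C2"
  shows "(\<lambda>p. s * X p - t * Y p) \<in> tensor_code C1 C2"
proof -
  have "fscale s (\<lambda>i. X (i, j)) - fscale t (\<lambda>i. Y (i, j)) \<in> C1"
    and "fscale s (\<lambda>j. X (i, j)) - fscale t (\<lambda>j. Y (i, j)) \<in> C2" for i j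
    using assms unfolding tensor_code_def
    by (simp_all add: fscale.subspace_diff fscale.subspace_scale)
  then show ?thesis
    by (simp add: tensor_code_def fscale_def fun_diff_def)
qed

lemma zero_in_tensor_code:
  "fscale.subspace C1 \<Longrightarrow> fscale.subspace C2 \<Longrightarrow> 0 \<in> tensor_code C1 C2"
  using fscale.subspace_0[of C1] fscale.subspace_0[of C2] by (simp add: tensor_code_def zero_fun_def)

lemma not_corrects_if_nonzero_codeword_vanishes:
  assumes "0 \<in> C" "X \<in> C" "X \<noteq> 0" "\<forall>p \<in> {1..m} \<times> {1..n} - E. X p = 0"
  shows "\<not> corrects m n C E"
  using assms unfolding corrects_def by (metis zero_fun_def)

text \<open>If \<open>Y p = 0\<close> take \<open>Y\<close> itself; otherwise \<open>Y p \<cdot> X - X p \<cdot> Y\<close> is nonzero at \<open>q\<close>.\<close>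

lemma exists_lincomb_nonzero_vanishing_at:
  fixes X Y :: "'b \<Rightarrow> 'a::field"
  assumes "X q \<noteq> 0" "Y q = 0" "Y \<noteq> 0"
  shows "\<exists>s t. (\<lambda>r. s * X r - t * Y r) \<noteq> 0 \<and> s * X p - t * Y p = 0"
proof (cases "Y p = 0")
  case True
  have "(\<lambda>r. 0 * X r - 1 * Y r) \<noteq> 0"
    using assms(3) by (simp add: fun_eq_iff)
  with True show ?thesis
    by (rule_tac exI[of _ 0], rule_tac exI[of _ 1]) simp
next
  case False
  with assms(1,2) have "(\<lambda>r. Y p * X r - X p * Y r) q \<noteq> 0"
    by simp
  then have "(\<lambda>r. Y p * X r - X p * Y r) \<noteq> 0"
    by (metis zero_fun_def)
  then show ?thesis
    by (rule_tac exI[of _ "Y p"], rule_tac exI[of _ "X p"]) simp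
qed

lemma nonerased_E4: "{1..5} \<times> {1..5} - E4 = {(1,1)} \<union> {2,3} \<times> {4,5} \<union> {4,5} \<times> {2,3}"
proof -
  have "{1..5 :: nat} = {1, 2, 3, 4, 5}"
    by auto
  then show ?thesis
    unfolding E4_def by auto
qed

lemma tensor_code_E4_codeword_row_1:
  assumes "fscale.subspace Ccol" "fscale.subspace Crow"
    and a: "a \<in> Ccol" "a \<noteq> 0" "\<And>i. i \<noteq> 1 \<Longrightarrow> a i = 0"
    and q: "q \<in> Crow" "q \<noteq> 0" "q 1 = 0"
  shows "\<exists>X \<in> tensor_code Ccol Crow. X \<noteq> (0 :: nat \<times> nat \<Rightarrow> 'a::field) \<and>
    (\<forall>p \<in> {1..5} \<times> {1..5} - E4. X p = 0)"
proof -
  have "outer_prod a q \<in> tensor_code Ccol Crow"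
    using assms(1,2) a(1) q(1) by (rule outer_prod_in_tensor_code)
  moreover have "outer_prod a q \<noteq> 0"
    using a(2) q(2) by (simp add: outer_prod_eq_0_iff)
  moreover have "\<forall>p \<in> {1..5} \<times> {1..5} - E4. outer_prod a q p = 0"
    unfolding nonerased_E4 using a(3) q(3) by (auto simp: outer_prod_def)
  ultimately show ?thesis
    by blast
qed

lemma tensor_code_E4_codeword_blocks:
  assumes "fscale.subspace Ccol" "fscale.subspace Crow"
    and a: "a \<in> Ccol" "a 4 = 0" "a 5 = 0" "i \<in> {2, 3}" "a i \<noteq> 0"
    and b: "b \<in> Crow" "b 4 = 0" "b 5 = 0" "b j \<noteq> 0"
    and c: "c \<in> Ccol" "c \<noteq> 0" "c 2 = 0" "c 3 = 0"
    and d: "d \<in> Crow" "d \<noteq> 0" "d 2 = 0" "d 3 = 0"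
  shows "\<exists>X \<in> tensor_code Ccol Crow. X \<noteq> (0 :: nat \<times> nat \<Rightarrow> 'a::field) \<and>
    (\<forall>p \<in> {1..5} \<times> {1..5} - E4. X p = 0)"
proof -
  let ?X = "outer_prod a b" and ?Y = "outer_prod c d"
  have "?X (i, j) \<noteq> 0" "?Y (i, j) = 0"
    using a(4,5) b(4) c(3,4) by (auto simp: outer_prod_def)
  moreover have "?Y \<noteq> 0"
    using c(2) d(2) by (simp add: outer_prod_eq_0_iff)
  ultimately have "\<exists>s t. (\<lambda>r. s * ?X r - t * ?Y r) \<noteq> 0 \<and> s * ?X (1, 1) - t * ?Y (1, 1) = 0"
    by (rule exists_lincomb_nonzero_vanishing_at)
  then obtain s t where st: "(\<lambda>r. s * ?X r - t * ?Y r) \<noteq> 0" "s * ?X (1, 1) - t * ?Y (1, 1) = 0"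
    by blast
  have "(\<lambda>r. s * ?X r - t * ?Y r) \<in> tensor_code Ccol Crow"
    using assms(1,2) a(1) b(1) c(1) d(1)
    by (intro tensor_code_diff_scale outer_prod_in_tensor_code)
  moreover have "\<forall>p \<in> {1..5} \<times> {1..5} - E4. s * ?X p - t * ?Y p = 0"
    unfolding nonerased_E4 using st(2) a(2,3) b(2,3) c(3,4) d(3,4) by (auto simp: outer_prod_def)
  ultimately show ?thesis
    using st(1) by blast
qed

lemma tensor_code_E4_codeword:
  fixes Ccol Crow :: "(nat \<Rightarrow> 'a::field) set"
  assumes "lin_code 5 3 Ccol" "lin_code 5 3 Crow"
  shows "\<exists>X \<in> tensor_code Ccol Crow. X \<noteq> 0 \<and> (\<forall>p \<in> {1..5} \<times> {1..5} - E4. X p = 0)"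
proof -
  have col: "fscale.subspace Ccol" "3 \<le> fscale.dim Ccol" "\<And>x i. x \<in> Ccol \<Longrightarrow> i \<notin> {1..5} \<Longrightarrow> x i = 0"
    and row: "fscale.subspace Crow" "3 \<le> fscale.dim Crow"
    using assms unfolding lin_code_def by blast+
  have vanishing_col: "\<exists>x\<in>Ccol. x \<noteq> 0 \<and> x u = 0 \<and> x v = 0"
    and vanishing_row: "\<exists>y\<in>Crow. y \<noteq> 0 \<and> y u = 0 \<and> y v = 0" for u v
    using fscale_subspace_nonzero_vanishing_on[OF col(1,2), of "{u, v}"]
      fscale_subspace_nonzero_vanishing_on[OF row(1,2), of "{u, v}"]
    by (auto simp: card_insert_if)
  obtain a where a: "a \<in> Ccol" "a \<noteq> 0" "a 4 = 0" "a 5 = 0"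
    using vanishing_col by blast
  show ?thesis
  proof (cases "a 2 = 0 \<and> a 3 = 0")
    case True
    have "a i = 0" if "i \<noteq> 1" for i
      using True a(3,4) col(3)[OF a(1), of i] that
      by (cases "i \<in> {1..5}") (auto simp: eval_nat_numeral le_Suc_eq)
    moreover obtain q where "q \<in> Crow" "q \<noteq> 0" "q 1 = 0"
      using vanishing_row by blast
    ultimately show ?thesis
      using col(1) row(1) a(1,2) by (intro tensor_code_E4_codeword_row_1)
  next
    case False
    then obtain i where "i \<in> {2, 3}" "a i \<noteq> 0"
      by auto
    moreover obtain b where b: "b \<in> Crow" "b \<noteq> 0" "b 4 = 0" "b 5 = 0"
      using vanishing_row by blast
    moreover obtain j where "b j \<noteq> 0"
      using b(2) by (auto simp: fun_eq_iff)
    moreover obtain c where "c \<in> Ccol" "c \<noteq> 0" "c 2 = 0" "c 3 = 0"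
      using vanishing_col by blast
    moreover obtain d where "d \<in> Crow" "d \<noteq> 0" "d 2 = 0" "d 3 = 0"
      using vanishing_row by blast
    ultimately show ?thesis
      using col(1) row(1) a by (intro tensor_code_E4_codeword_blocks) blast+
  qed
qed

lemma not_corrects_E4:
  fixes Ccol Crow :: "(nat \<Rightarrow> 'a::field) set"
  assumes "lin_code 5 3 Ccol" "lin_code 5 3 Crow"
  shows "\<not> corrects 5 5 (tensor_code Ccol Crow) E4"
proof -
  have "0 \<in> tensor_code Ccol Crow"
    using assms by (intro zero_in_tensor_code) (simp_all add: lin_code_def)
  then show ?thesis
    using tensor_code_E4_codeword[OF assms] not_corrects_if_nonzero_codeword_vanishes
    by blast
qed

lemma regular_E4: "regular 5 5 2 2 E4"
proof -
  have "\<forall>U\<in>Pow (set [1, 2, 3, 4, 5]). \<forall>V\<in>Pow (set [1, 2, 3, 4, 5]). 2 \<le> card U \<longrightarrow> 2 \<le> card V \<longrightarrow>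
      int (card (E4 \<inter> (U \<times> V))) \<le> int (card V * 2 + card U * 2) - int (2 * 2)"
    by code_simp
  moreover have "{1..5} = set [1, 2, 3, 4, 5 :: nat]"
    by auto
  ultimately show ?thesis
    unfolding regular_def Pow_def by blast
qed

theorem lemma4:
  shows "regular 5 5 2 2 E4 \<and> \<not> correctable_over TYPE('a::{field,finite}) 5 5 2 2 E4"
  using regular_E4 not_corrects_E4 by (auto simp: correctable_over_def)

end
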